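(* Let $\Lambda$ be a row-finite $k$-graph with no sources and let $\alpha$ be an action of $\mathbb{Z}^l$ on $\Lambda$ by automorphisms. Then $\Lambda$ is $\alpha$-aperiodic if and only if $\Lambda\times_\alpha\mathbb{Z}^l$ has no local periodicity.
   Context: A $k$-graph is a countable category $\Lambda$ with a functor $d:\Lambda\to\mathbb{N}^k$ with unique factorisation; vertices are degree-$0$ morphisms; row-finite: each $v\Lambda^n$ finite; no sources: each $v\Lambda^n$ nonempty. An automorphism is a bijective degree-preserving functor. $\Lambda\times_\alpha\mathbb{Z}^l$ is the $(k+l)$-graph with morphisms $\Lambda\times\mathbb{N}^l$, degree $(d(\lambda),m)$, $r(\lambda,m)=(r(\lambda),0)$, $s(\lambda,m)=(\alpha_{-m}(s(\lambda)),0)$, $(\mu,m)(\nu,n)=(\mu\alpha_m(\nu),m+n)$. For a $j$-graph $\Gamma$, $\Gamma^\infty$ is the set of degree-preserving functors $x:\Omega_j\to\Gamma$ ($\Omega_j=\{(a,b)\in\mathbb{N}^j\times\mathbb{N}^j:a\le b\}$, $r(a,b)=(a,a)$, $s(a,b)=(b,b)$, $d(a,b)=b-a$, composition $(a,b)(b,c)=(a,c)$), $v\Gamma^\infty=\{x:x(0,0)=v\}$, $\sigma^q(x)(0,n)=x(q,q+n)$. $\Gamma$ has no local periodicity if for every vertex $v$ and distinct $m,n\in\mathbb{N}^j$ there is $x\in v\Gamma^\infty$ with $\sigma^m(x)\ne\sigma^n(x)$. For an automorphism $\phi$ of $\Lambda$, $\phi^\infty(x)(0,n)=\phi(x(0,n))$.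 $\Lambda$ is $\alpha$-aperiodic if for each vertex $v$ and distinct $(p,m),(q,n)\in\mathbb{N}^k\times\mathbb{N}^l$ there is $x\in v\Lambda^\infty$ with $\sigma^p(\alpha^\infty_{-m}(x))\ne\sigma^q(\alpha^\infty_{-n}(x))$. *)

theory Defs
  imports Main "HOL-Library.Countable_Set" "HOL-Library.Function_Algebras"
begin

text \<open>A higher-rank graph is represented as a small category whose morphisms live in a set
  (mor), with range/source maps to identity morphisms, a partial composition (cmp, meaningful
  when src mu = rng nu), and a degree functor into N^k, where N^k is represented by functions
  nat => nat vanishing from index k on.\<close>

record 'm kg =
  mor :: "'m set"
  rng :: "'m \<Rightarrow> 'm"
  src :: "'m \<Rightarrow> 'm"
  cmp :: "'m \<Rightarrow> 'm \<Rightarrow> 'm"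
  deg :: "'m \<Rightarrow> nat \<Rightarrow> nat"

definition NN :: "nat \<Rightarrow> (nat \<Rightarrow> nat) set" where
  "NN k = {n. \<forall>i\<ge>k. n i = 0}"

definition ZZ :: "nat \<Rightarrow> (nat \<Rightarrow> int) set" where
  "ZZ l = {n. \<forall>i\<ge>l. n i = 0}"

definition kgraph :: "nat \<Rightarrow> 'm kg \<Rightarrow> bool" where
  "kgraph k G \<longleftrightarrow>
     countable (mor G) \<and>
     (\<forall>x\<in>mor G. deg G x \<in> NN k) \<and>
     (\<forall>x\<in>mor G. rng G x \<in> mor G \<and> src G x \<in> mor G \<and>
        rng G (rng G x) = rng G x \<and> src G (rng G x) = rng G x \<and>
        rng G (src G x) = src G x \<and> src G (src G x) = src G x \<and>
        cmp G (rng G x) x = x \<and> cmp G x (src G x) = x) \<and>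
     (\<forall>\<mu>\<in>mor G. \<forall>\<nu>\<in>mor G. src G \<mu> = rng G \<nu> \<longrightarrow>
        cmp G \<mu> \<nu> \<in> mor G \<and> rng G (cmp G \<mu> \<nu>) = rng G \<mu> \<and>
        src G (cmp G \<mu> \<nu>) = src G \<nu> \<and> deg G (cmp G \<mu> \<nu>) = deg G \<mu> + deg G \<nu>) \<and>
     (\<forall>\<mu>\<in>mor G. \<forall>\<nu>\<in>mor G. \<forall>\<rho>\<in>mor G. src G \<mu> = rng G \<nu> \<longrightarrow> src G \<nu> = rng G \<rho> \<longrightarrow>
        cmp G (cmp G \<mu> \<nu>) \<rho> = cmp G \<mu> (cmp G \<nu> \<rho>)) \<and>
     (\<forall>x\<in>mor G. \<forall>m n. deg G x = m + n \<longrightarrow>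
        (\<exists>!(\<mu>, \<nu>). \<mu> \<in> mor G \<and> \<nu> \<in> mor G \<and> src G \<mu> = rng G \<nu> \<and>
            deg G \<mu> = m \<and> deg G \<nu> = n \<and> cmp G \<mu> \<nu> = x))"

definition vertex :: "'m kg \<Rightarrow> 'm \<Rightarrow> bool" where
  "vertex G v \<longleftrightarrow> v \<in> mor G \<and> deg G v = 0"

definition paths_from :: "'m kg \<Rightarrow> 'm \<Rightarrow> (nat \<Rightarrow> nat) \<Rightarrow> 'm set" where
  "paths_from G v n = {x \<in> mor G. rng G x = v \<and> deg G x = n}"

definition row_finite :: "nat \<Rightarrow> 'm kg \<Rightarrow> bool" where
  "row_finite k G \<longleftrightarrow> (\<forall>v n. vertex G v \<longrightarrow> n \<in> NN k \<longrightarrow> finite (paths_from G v n))"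

definition no_sources :: "nat \<Rightarrow> 'm kg \<Rightarrow> bool" where
  "no_sources k G \<longleftrightarrow> (\<forall>v n. vertex G v \<longrightarrow> n \<in> NN k \<longrightarrow> paths_from G v n \<noteq> {})"

definition automorphism :: "'m kg \<Rightarrow> ('m \<Rightarrow> 'm) \<Rightarrow> bool" where
  "automorphism G \<phi> \<longleftrightarrow>
     bij_betw \<phi> (mor G) (mor G) \<and>
     (\<forall>x\<in>mor G. deg G (\<phi> x) = deg G x \<and> rng G (\<phi> x) = \<phi> (rng G x) \<and>
        src G (\<phi> x) = \<phi> (src G x)) \<and>
     (\<forall>\<mu>\<in>mor G. \<forall>\<nu>\<in>mor G. src G \<mu> = rng G \<nu> \<longrightarrow>
        \<phi> (cmp G \<mu> \<nu>) = cmp G (\<phi> \<mu>) (\<phi> \<nu>))"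

definition is_action :: "nat \<Rightarrow> 'm kg \<Rightarrow> ((nat \<Rightarrow> int) \<Rightarrow> 'm \<Rightarrow> 'm) \<Rightarrow> bool" where
  "is_action l G \<alpha> \<longleftrightarrow>
     (\<forall>m\<in>ZZ l. automorphism G (\<alpha> m)) \<and>
     (\<forall>x\<in>mor G. \<alpha> 0 x = x) \<and>
     (\<forall>m\<in>ZZ l. \<forall>n\<in>ZZ l. \<forall>x\<in>mor G. \<alpha> (m + n) x = \<alpha> m (\<alpha> n x))"

definition toZ :: "(nat \<Rightarrow> nat) \<Rightarrow> nat \<Rightarrow> int" where
  "toZ m = (\<lambda>i. int (m i))"

definition crossed :: "nat \<Rightarrow> nat \<Rightarrow> 'm kg \<Rightarrow> ((nat \<Rightarrow> int) \<Rightarrow> 'm \<Rightarrow> 'm)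
    \<Rightarrow> ('m \<times> (nat \<Rightarrow> nat)) kg" where
  "crossed k l G \<alpha> =
     \<lparr> mor = {(x, m). x \<in> mor G \<and> m \<in> NN l},
       rng = (\<lambda>(x, m). (rng G x, 0)),
       src = (\<lambda>(x, m). (\<alpha> (- toZ m) (src G x), 0)),
       cmp = (\<lambda>(\<mu>, m) (\<nu>, n). (cmp G \<mu> (\<alpha> (toZ m) \<nu>), m + n)),
       deg = (\<lambda>(x, m) i. if i < k then deg G x i else m (i - k)) \<rparr>"

definition Omega :: "nat \<Rightarrow> ((nat \<Rightarrow> nat) \<times> (nat \<Rightarrow> nat)) set" where
  "Omega j = {(a, b). a \<in> NN j \<and> b \<in> NN j \<and> a \<le> b}"

text \<open>Infinite paths: degree-preserving functors Omega_j -> G; functions are normalised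
  to be undefined outside Omega_j so that equality of functions is equality of functors.\<close>
definition infpaths :: "nat \<Rightarrow> 'm kg \<Rightarrow> (((nat \<Rightarrow> nat) \<times> (nat \<Rightarrow> nat)) \<Rightarrow> 'm) set" where
  "infpaths j G = {x.
     (\<forall>a b. (a, b) \<in> Omega j \<longrightarrow> x (a, b) \<in> mor G \<and> deg G (x (a, b)) = b - a \<and>
        rng G (x (a, b)) = x (a, a) \<and> src G (x (a, b)) = x (b, b)) \<and>
     (\<forall>a b c. (a, b) \<in> Omega j \<longrightarrow> (b, c) \<in> Omega j \<longrightarrow>
        x (a, c) = cmp G (x (a, b)) (x (b, c))) \<and>
     (\<forall>p. p \<notin> Omega j \<longrightarrow> x p = undefined)}"

definition vinfpaths :: "nat \<Rightarrow> 'm kg \<Rightarrow> 'm \<Rightarrow> (((nat \<Rightarrow> nat) \<times> (nat \<Rightarrow> nat)) \<Rightarrow> 'm) set" where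
  "vinfpaths j G v = {x \<in> infpaths j G. x (0, 0) = v}"

definition shift :: "nat \<Rightarrow> (nat \<Rightarrow> nat) \<Rightarrow> (((nat \<Rightarrow> nat) \<times> (nat \<Rightarrow> nat)) \<Rightarrow> 'm)
    \<Rightarrow> (((nat \<Rightarrow> nat) \<times> (nat \<Rightarrow> nat)) \<Rightarrow> 'm)" where
  "shift j q x = (\<lambda>(a, b). if (a, b) \<in> Omega j then x (q + a, q + b) else undefined)"

definition autinf :: "nat \<Rightarrow> ('m \<Rightarrow> 'm) \<Rightarrow> (((nat \<Rightarrow> nat) \<times> (nat \<Rightarrow> nat)) \<Rightarrow> 'm)
    \<Rightarrow> (((nat \<Rightarrow> nat) \<times> (nat \<Rightarrow> nat)) \<Rightarrow> 'm)" where
  "autinf j \<phi> x = (\<lambda>p. if p \<in> Omega j then \<phi> (x p) else undefined)"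

definition no_local_periodicity :: "nat \<Rightarrow> 'm kg \<Rightarrow> bool" where
  "no_local_periodicity j G \<longleftrightarrow>
     (\<forall>v m n. vertex G v \<longrightarrow> m \<in> NN j \<longrightarrow> n \<in> NN j \<longrightarrow> m \<noteq> n \<longrightarrow>
        (\<exists>x\<in>vinfpaths j G v. shift j m x \<noteq> shift j n x))"

definition alpha_aperiodic :: "nat \<Rightarrow> nat \<Rightarrow> 'm kg \<Rightarrow> ((nat \<Rightarrow> int) \<Rightarrow> 'm \<Rightarrow> 'm) \<Rightarrow> bool" where
  "alpha_aperiodic k l G \<alpha> \<longleftrightarrow>
     (\<forall>v p q m n. vertex G v \<longrightarrow> p \<in> NN k \<longrightarrow> q \<in> NN k \<longrightarrow> m \<in> NN l \<longrightarrow> n \<in> NN l \<longrightarrow>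
        (p, m) \<noteq> (q, n) \<longrightarrow>
        (\<exists>x\<in>vinfpaths k G v.
           shift k p (autinf k (\<alpha> (- toZ m)) x) \<noteq> shift k q (autinf k (\<alpha> (- toZ n)) x)))"

end

theory Submission
  imports Defs "HOL-Library.FuncSet"
begin

text \<open>An infinite path \<open>y\<close> of \<open>\<Lambda> \<times>\<^sub>\<alpha> \<int>\<^sup>l\<close> is determined by its values on
  degrees of the form \<open>(p, 0)\<close>: if \<open>x (p, q)\<close> is the \<open>\<Lambda>\<close>-component of
  \<open>y ((p, 0), (q, 0))\<close>, then \<open>y ((p, m), (q, n)) = (\<alpha>\<^sub>-\<^sub>m (x (p, q)), n - m)\<close>. This identifies the
  infinite paths of \<open>\<Lambda> \<times>\<^sub>\<alpha> \<int>\<^sup>l\<close> at \<open>(v, 0)\<close> with those of \<open>\<Lambda>\<close> at \<open>v\<close>, and turns the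
  shift by \<open>(p, m)\<close> into \<open>x \<mapsto> \<sigma>\<^sup>p (\<alpha>\<^sup>\<infinity>\<^sub>-\<^sub>m x)\<close>; the two aperiodicity conditions then
  coincide term by term.\<close>

definition head_part :: "nat \<Rightarrow> (nat \<Rightarrow> nat) \<Rightarrow> nat \<Rightarrow> nat" where
  "head_part k c = (\<lambda>i. if i < k then c i else 0)"

definition tail_part :: "nat \<Rightarrow> (nat \<Rightarrow> nat) \<Rightarrow> nat \<Rightarrow> nat" where
  "tail_part k c = (\<lambda>j. c (k + j))"

definition join_parts :: "nat \<Rightarrow> (nat \<Rightarrow> nat) \<Rightarrow> (nat \<Rightarrow> nat) \<Rightarrow> nat \<Rightarrow> nat" where
  "join_parts k p m = (\<lambda>i. if i < k then p i else m (i - k))"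

lemmas parts_unfold = head_part_def tail_part_def join_parts_def NN_def
  fun_eq_iff le_fun_def plus_fun_def fun_diff_def zero_fun_def

lemma head_join_parts [simp]: "p \<in> NN k \<Longrightarrow> head_part k (join_parts k p m) = p"
  by (auto simp: parts_unfold)

lemma tail_join_parts [simp]: "tail_part k (join_parts k p m) = m"
  by (auto simp: parts_unfold)

lemma join_head_tail: "c \<in> NN (k + l) \<Longrightarrow> join_parts k (head_part k c) (tail_part k c) = c"
  by (auto simp: parts_unfold)

lemma head_part_NN [simp]: "head_part k c \<in> NN k"
  by (auto simp: parts_unfold)

lemma tail_part_NN: "c \<in> NN (k + l) \<Longrightarrow> tail_part k c \<in> NN l"
  by (auto simp: parts_unfold)

lemma join_parts_NN: "p \<in> NN k \<Longrightarrow> m \<in> NN l \<Longrightarrow> join_parts k p m \<in> NN (k + l)"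
  by (auto simp: parts_unfold)

lemma NN_add_split:
  "c \<in> NN (k + l) \<longleftrightarrow> (\<exists>p\<in>NN k. \<exists>m\<in>NN l. c = join_parts k p m)"
  using join_head_tail tail_part_NN head_part_NN join_parts_NN by metis

lemma join_parts_eq_iff:
  "p \<in> NN k \<Longrightarrow> q \<in> NN k \<Longrightarrow> join_parts k p m = join_parts k q n \<longleftrightarrow> p = q \<and> m = n"
  by (metis head_join_parts tail_join_parts)

lemma head_part_add [simp]: "head_part k (a + b) = head_part k a + head_part k b"
  and tail_part_add [simp]: "tail_part k (a + b) = tail_part k a + tail_part k b"
  and join_parts_diff: "join_parts k (p - q) (m - n) = join_parts k p m - join_parts k q n"
  and join_parts_zero [simp]: "join_parts k 0 0 = 0"
  and head_part_zero [simp]: "head_part k 0 = 0"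
  and tail_part_zero [simp]: "tail_part k 0 = 0"
  by (auto simp: parts_unfold)

lemma head_part_mono: "a \<le> b \<Longrightarrow> head_part k a \<le> head_part k b"
  and tail_part_mono: "a \<le> b \<Longrightarrow> tail_part k a \<le> tail_part k b"
  and join_parts_mono: "p \<le> q \<Longrightarrow> m \<le> n \<Longrightarrow> join_parts k p m \<le> join_parts k q n"
  by (auto simp: parts_unfold)

lemma NN_add: "a \<in> NN j \<Longrightarrow> b \<in> NN j \<Longrightarrow> a + b \<in> NN j"
  and NN_diff: "a \<in> NN j \<Longrightarrow> a - b \<in> NN j"
  and NN_zero [simp]: "0 \<in> NN j"
  by (auto simp: NN_def)

lemma diff_add_diff_fun: "(a :: nat \<Rightarrow> nat) \<le> b \<Longrightarrow> b \<le> c \<Longrightarrow> (b - a) + (c - b) = c - a"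
  by (auto simp: le_fun_def fun_eq_iff)

lemma Omega_iff: "(a, b) \<in> Omega j \<longleftrightarrow> a \<in> NN j \<and> b \<in> NN j \<and> a \<le> b"
  by (simp add: Omega_def)

lemma Omega_translate: "(a, b) \<in> Omega j \<Longrightarrow> p \<in> NN j \<Longrightarrow> (p + a, p + b) \<in> Omega j"
  by (auto simp: Omega_iff NN_add add_left_mono)

lemma Omega_head_part: "(a, b) \<in> Omega (k + l) \<Longrightarrow> (head_part k a, head_part k b) \<in> Omega k"
  by (simp add: Omega_iff head_part_mono)

lemma Omega_join_parts:
  "(p, q) \<in> Omega k \<Longrightarrow> m \<in> NN l \<Longrightarrow> n \<in> NN l \<Longrightarrow> m \<le> n \<Longrightarrow>
     (join_parts k p m, join_parts k q n) \<in> Omega (k + l)"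
  by (simp add: Omega_iff join_parts_NN join_parts_mono)

lemma Omega_join_parts_zero:
  "(p, q) \<in> Omega k \<Longrightarrow> (join_parts k p 0, join_parts k q 0) \<in> Omega (k + l)"
  by (simp add: Omega_join_parts)

lemma toZ_add: "toZ (m + n) = toZ m + toZ n"
  and toZ_zero [simp]: "toZ 0 = 0"
  by (auto simp: toZ_def)

lemma toZ_diff: "m \<le> n \<Longrightarrow> toZ (n - m) = toZ n - toZ m"
  by (auto simp: toZ_def le_fun_def)

lemma toZ_ZZ: "m \<in> NN l \<Longrightarrow> toZ m \<in> ZZ l"
  by (auto simp: toZ_def NN_def ZZ_def)

lemma ZZ_uminus: "m \<in> ZZ l \<Longrightarrow> - m \<in> ZZ l"
  by (auto simp: ZZ_def)

lemma mor_crossed [simp]: "mor (crossed k l G \<alpha>) = {(x, m). x \<in> mor G \<and> m \<in> NN l}"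
  and rng_crossed [simp]: "rng (crossed k l G \<alpha>) (x, m) = (rng G x, 0)"
  and src_crossed [simp]: "src (crossed k l G \<alpha>) (x, m) = (\<alpha> (- toZ m) (src G x), 0)"
  and cmp_crossed [simp]: "cmp (crossed k l G \<alpha>) (\<mu>, m) (\<nu>, n) = (cmp G \<mu> (\<alpha> (toZ m) \<nu>), m + n)"
  and deg_crossed [simp]: "deg (crossed k l G \<alpha>) (x, m) = join_parts k (deg G x) m"
  by (simp_all add: crossed_def join_parts_def)

lemma infpathsD:
  assumes "x \<in> infpaths j H" and "(a, b) \<in> Omega j"
  shows "x (a, b) \<in> mor H" "deg H (x (a, b)) = b - a"
    "rng H (x (a, b)) = x (a, a)" "src H (x (a, b)) = x (b, b)"
  using assms unfolding infpaths_def by blast+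

lemma infpaths_cmp:
  "x \<in> infpaths j H \<Longrightarrow> (a, b) \<in> Omega j \<Longrightarrow> (b, c) \<in> Omega j \<Longrightarrow>
     x (a, c) = cmp H (x (a, b)) (x (b, c))"
  unfolding infpaths_def by blast

lemma infpathsI:
  assumes "\<And>a b. (a, b) \<in> Omega j \<Longrightarrow> x (a, b) \<in> mor H \<and> deg H (x (a, b)) = b - a \<and>
      rng H (x (a, b)) = x (a, a) \<and> src H (x (a, b)) = x (b, b)"
    and "\<And>a b c. (a, b) \<in> Omega j \<Longrightarrow> (b, c) \<in> Omega j \<Longrightarrow>
      x (a, c) = cmp H (x (a, b)) (x (b, c))"
    and "\<And>z. z \<notin> Omega j \<Longrightarrow> x z = undefined"
  shows "x \<in> infpaths j H"
  using assms unfolding infpaths_def by blast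

lemma infpaths_PiE: "infpaths j H \<subseteq> Omega j \<rightarrow>\<^sub>E mor H"
  unfolding infpaths_def PiE_def extensional_def by auto

lemma shift_autinf:
  "(a, b) \<in> Omega k \<Longrightarrow> p \<in> NN k \<Longrightarrow> shift k p (autinf k \<phi> x) (a, b) = \<phi> (x (p + a, p + b))"
  by (simp add: shift_def autinf_def Omega_translate)

lemma shift_autinf_PiE:
  assumes x: "x \<in> Omega k \<rightarrow>\<^sub>E A" and \<phi>: "\<phi> ` A \<subseteq> A" and p: "p \<in> NN k"
  shows "shift k p (autinf k \<phi> x) \<in> Omega k \<rightarrow>\<^sub>E A"
proof (rule PiE_I)
  fix z assume "z \<in> Omega k"
  moreover obtain a b where "z = (a, b)" by fastforce
  ultimately show "shift k p (autinf k \<phi> x) z \<in> A"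
    using PiE_mem[OF x Omega_translate] \<phi> p by (auto simp: shift_autinf)
next
  fix z assume "z \<notin> Omega k"
  then show "shift k p (autinf k \<phi> x) z = undefined" by (cases z) (simp add: shift_def)
qed

locale k_graph =
  fixes k :: nat and G :: "'m kg"
  assumes kgraph: "kgraph k G"
begin

lemma deg_NN: "x \<in> mor G \<Longrightarrow> deg G x \<in> NN k"
  using kgraph unfolding kgraph_def by simp

lemma rng_mor: "x \<in> mor G \<Longrightarrow> rng G x \<in> mor G"
  and src_mor: "x \<in> mor G \<Longrightarrow> src G x \<in> mor G"
  and cmp_rng_left: "x \<in> mor G \<Longrightarrow> cmp G (rng G x) x = x"
  and cmp_src_right: "x \<in> mor G \<Longrightarrow> cmp G x (src G x) = x"
  and src_rng: "x \<in> mor G \<Longrightarrow> src G (rng G x) = rng G x"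
  and rng_src: "x \<in> mor G \<Longrightarrow> rng G (src G x) = src G x"
  using kgraph unfolding kgraph_def by simp_all

lemma deg_cmp:
  "\<mu> \<in> mor G \<Longrightarrow> \<nu> \<in> mor G \<Longrightarrow> src G \<mu> = rng G \<nu> \<Longrightarrow>
     deg G (cmp G \<mu> \<nu>) = deg G \<mu> + deg G \<nu>"
  using kgraph unfolding kgraph_def by simp

lemma unique_factorisation:
  "x \<in> mor G \<Longrightarrow> deg G x = m + n \<Longrightarrow>
     \<exists>!(\<mu>, \<nu>). \<mu> \<in> mor G \<and> \<nu> \<in> mor G \<and> src G \<mu> = rng G \<nu> \<and>
        deg G \<mu> = m \<and> deg G \<nu> = n \<and> cmp G \<mu> \<nu> = x"
  using kgraph unfolding kgraph_def by simp

text \<open>Both \<open>rng x \<cdot> x\<close> and \<open>x \<cdot> src x\<close> factorise \<open>x\<close> into two morphisms of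
  degree \<open>0\<close>, so unique factorisation identifies them.\<close>
lemma deg_zero_rng_src:
  assumes x: "x \<in> mor G" and d: "deg G x = 0"
  shows "rng G x = x \<and> src G x = x"
proof -
  have "deg G x = deg G (rng G x) + deg G x"
    using deg_cmp[OF rng_mor[OF x] x src_rng[OF x]] cmp_rng_left[OF x] by simp
  then have dr: "deg G (rng G x) = 0" using d by simp
  have "deg G x = deg G x + deg G (src G x)"
    using deg_cmp[OF x src_mor[OF x] rng_src[OF x, symmetric]] cmp_src_right[OF x] by simp
  then have ds: "deg G (src G x) = 0" using d by simp
  define factors where "factors = (\<lambda>(\<mu>, \<nu>). \<mu> \<in> mor G \<and> \<nu> \<in> mor G \<and>
    src G \<mu> = rng G \<nu> \<and> deg G \<mu> = 0 \<and> deg G \<nu> = 0 \<and> cmp G \<mu> \<nu> = x)"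
  have "deg G x = 0 + 0" using d by simp
  from unique_factorisation[OF x this] have "\<exists>!z. factors z" unfolding factors_def .
  moreover have "factors (rng G x, x)" "factors (x, src G x)"
    unfolding factors_def
    using x d dr ds rng_mor[OF x] src_mor[OF x] src_rng[OF x] rng_src[OF x] cmp_rng_left[OF x]
      cmp_src_right[OF x]
    by simp_all
  ultimately have "(rng G x, x) = (x, src G x)" by metis
  then show ?thesis by (metis prod.inject)
qed

lemma cmp_deg_zero_left:
  "\<mu> \<in> mor G \<Longrightarrow> \<nu> \<in> mor G \<Longrightarrow> deg G \<mu> = 0 \<Longrightarrow> src G \<mu> = rng G \<nu> \<Longrightarrow> cmp G \<mu> \<nu> = \<nu>"
  using deg_zero_rng_src[of \<mu>] cmp_rng_left[of \<nu>] by metis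

lemma cmp_deg_zero_right:
  "\<mu> \<in> mor G \<Longrightarrow> \<nu> \<in> mor G \<Longrightarrow> deg G \<nu> = 0 \<Longrightarrow> src G \<mu> = rng G \<nu> \<Longrightarrow> cmp G \<mu> \<nu> = \<mu>"
  using deg_zero_rng_src[of \<nu>] cmp_src_right[of \<mu>] by metis

lemma vertex_crossed: "vertex (crossed k l G \<alpha>) w \<longleftrightarrow> (\<exists>v. w = (v, 0) \<and> vertex G v)"
proof -
  have "join_parts k (deg G x) m = 0 \<longleftrightarrow> deg G x = 0 \<and> m = 0" if "x \<in> mor G" for x m
    using join_parts_eq_iff[OF deg_NN[OF that] NN_zero, of m 0] by simp
  then show ?thesis by (cases w) (auto simp: vertex_def)
qed

lemma crossed_infpath_value:
  assumes y: "y \<in> infpaths (k + l) (crossed k l G \<alpha>)" and ab: "(a, b) \<in> Omega (k + l)"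
  shows "y (a, b) = (fst (y (a, b)), tail_part k b - tail_part k a)" "fst (y (a, b)) \<in> mor G"
    "deg G (fst (y (a, b))) = head_part k b - head_part k a"
proof -
  obtain \<mu> t where yab: "y (a, b) = (\<mu>, t)" by fastforce
  have \<mu>: "\<mu> \<in> mor G" using infpathsD(1)[OF y ab] yab by simp
  have "join_parts k (deg G \<mu>) t = b - a" using infpathsD(2)[OF y ab] yab by simp
  also have "b - a = join_parts k (head_part k b - head_part k a) (tail_part k b - tail_part k a)"
    using ab join_head_tail[of a k l] join_head_tail[of b k l] by (simp add: join_parts_diff Omega_iff)
  finally have "deg G \<mu> = head_part k b - head_part k a \<and> t = tail_part k b - tail_part k a"
    using join_parts_eq_iff deg_NN[OF \<mu>] NN_diff head_part_NN by blast
  then show "y (a, b) = (fst (y (a, b)), tail_part k b - tail_part k a)" "fst (y (a, b)) \<in> mor G"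
    "deg G (fst (y (a, b))) = head_part k b - head_part k a"
    using yab \<mu> by simp_all
qed

end

definition lift_path :: "nat \<Rightarrow> nat \<Rightarrow> ((nat \<Rightarrow> int) \<Rightarrow> 'm \<Rightarrow> 'm) \<Rightarrow>
    ((nat \<Rightarrow> nat) \<times> (nat \<Rightarrow> nat) \<Rightarrow> 'm) \<Rightarrow> (nat \<Rightarrow> nat) \<times> (nat \<Rightarrow> nat) \<Rightarrow> 'm \<times> (nat \<Rightarrow> nat)"
  where "lift_path k l \<alpha> x = (\<lambda>(a, b). if (a, b) \<in> Omega (k + l)
    then (\<alpha> (- toZ (tail_part k a)) (x (head_part k a, head_part k b)), tail_part k b - tail_part k a)
    else undefined)"

definition base_path :: "nat \<Rightarrow> ((nat \<Rightarrow> nat) \<times> (nat \<Rightarrow> nat) \<Rightarrow> 'm \<times> (nat \<Rightarrow> nat)) \<Rightarrow>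
    (nat \<Rightarrow> nat) \<times> (nat \<Rightarrow> nat) \<Rightarrow> 'm"
  where "base_path k y = (\<lambda>(p, q). if (p, q) \<in> Omega k
    then fst (y (join_parts k p 0, join_parts k q 0)) else undefined)"

lemma lift_path_apply:
  "(a, b) \<in> Omega (k + l) \<Longrightarrow> lift_path k l \<alpha> x (a, b) =
     (\<alpha> (- toZ (tail_part k a)) (x (head_part k a, head_part k b)), tail_part k b - tail_part k a)"
  by (simp add: lift_path_def)

locale k_graph_action = k_graph k G
  for k :: nat and G :: "'m kg" +
  fixes l :: nat and \<alpha> :: "(nat \<Rightarrow> int) \<Rightarrow> 'm \<Rightarrow> 'm"
  assumes action: "is_action l G \<alpha>"
begin

lemma act_zero [simp]: "x \<in> mor G \<Longrightarrow> \<alpha> 0 x = x"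
  using action by (simp add: is_action_def)

lemma act_add: "m \<in> ZZ l \<Longrightarrow> n \<in> ZZ l \<Longrightarrow> x \<in> mor G \<Longrightarrow> \<alpha> (m + n) x = \<alpha> m (\<alpha> n x)"
  using action by (simp add: is_action_def)

lemma act_mor: "m \<in> ZZ l \<Longrightarrow> x \<in> mor G \<Longrightarrow> \<alpha> m x \<in> mor G"
  using action unfolding is_action_def automorphism_def bij_betw_def by blast

lemma act_deg: "m \<in> ZZ l \<Longrightarrow> x \<in> mor G \<Longrightarrow> deg G (\<alpha> m x) = deg G x"
  and act_rng: "m \<in> ZZ l \<Longrightarrow> x \<in> mor G \<Longrightarrow> rng G (\<alpha> m x) = \<alpha> m (rng G x)"
  and act_src: "m \<in> ZZ l \<Longrightarrow> x \<in> mor G \<Longrightarrow> src G (\<alpha> m x) = \<alpha> m (src G x)"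
  using action unfolding is_action_def automorphism_def by blast+

lemma act_cmp:
  "m \<in> ZZ l \<Longrightarrow> \<mu> \<in> mor G \<Longrightarrow> \<nu> \<in> mor G \<Longrightarrow> src G \<mu> = rng G \<nu> \<Longrightarrow>
     \<alpha> m (cmp G \<mu> \<nu>) = cmp G (\<alpha> m \<mu>) (\<alpha> m \<nu>)"
  using action unfolding is_action_def automorphism_def by blast

lemma act_uminus_cancel: "m \<in> ZZ l \<Longrightarrow> x \<in> mor G \<Longrightarrow> \<alpha> m (\<alpha> (- m) x) = x"
  and act_cancel_uminus: "m \<in> ZZ l \<Longrightarrow> x \<in> mor G \<Longrightarrow> \<alpha> (- m) (\<alpha> m x) = x"
  using act_add[of m "- m" x] act_add[of "- m" m x] ZZ_uminus by simp_all

lemma crossed_cmp_deg_zero_left: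
  assumes w: "w \<in> mor G" "deg G w = 0" and m: "m \<in> NN l" and \<mu>: "\<mu> \<in> mor G"
    and "src (crossed k l G \<alpha>) (w, m) = rng (crossed k l G \<alpha>) (\<mu>, t)"
  shows "cmp (crossed k l G \<alpha>) (w, m) (\<mu>, t) = (\<alpha> (toZ m) \<mu>, m + t)"
proof -
  have zm: "toZ m \<in> ZZ l" using toZ_ZZ[OF m] .
  have "\<alpha> (- toZ m) w = rng G \<mu>" using assms(5) deg_zero_rng_src[OF w] by simp
  then have "src G w = rng G (\<alpha> (toZ m) \<mu>)"
    using deg_zero_rng_src[OF w] act_rng[OF zm \<mu>] act_uminus_cancel[OF zm w(1)] by simp
  then show ?thesis using cmp_deg_zero_left[OF w(1) act_mor[OF zm \<mu>] w(2)] by simp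
qed

lemma crossed_cmp_deg_zero_right:
  assumes x: "x \<in> mor G" and w: "w \<in> mor G" "deg G w = 0"
    and "src (crossed k l G \<alpha>) (x, 0) = rng (crossed k l G \<alpha>) (w, n)"
  shows "cmp (crossed k l G \<alpha>) (x, 0) (w, n) = (x, n)"
  using assms cmp_deg_zero_right[OF x w(1) w(2)] src_mor[OF x] by simp

lemma lift_path_ends:
  assumes x: "x \<in> infpaths k G" and ab: "(a, b) \<in> Omega (k + l)"
  defines "y \<equiv> lift_path k l \<alpha> x" and "H \<equiv> crossed k l G \<alpha>"
  shows "y (a, b) \<in> mor H \<and> deg H (y (a, b)) = b - a \<and>
    rng H (y (a, b)) = y (a, a) \<and> src H (y (a, b)) = y (b, b)"
proof -
  have aa: "(a, a) \<in> Omega (k + l)" and bb: "(b, b) \<in> Omega (k + l)"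
    using ab by (auto simp: Omega_iff)
  have hd: "(head_part k a, head_part k b) \<in> Omega k" using Omega_head_part[OF ab] .
  have ta: "tail_part k a \<in> NN l" and tb: "tail_part k b \<in> NN l"
    and tab: "tail_part k a \<le> tail_part k b"
    using ab tail_part_NN tail_part_mono by (auto simp: Omega_iff)
  define \<mu> where "\<mu> = x (head_part k a, head_part k b)"
  note \<mu>_ends = infpathsD[OF x hd, folded \<mu>_def]
  have za: "- toZ (tail_part k a) \<in> ZZ l" and zb: "- toZ (tail_part k b) \<in> ZZ l"
    and zd: "- toZ (tail_part k b - tail_part k a) \<in> ZZ l"
    using ta tb NN_diff toZ_ZZ ZZ_uminus by blast+
  have "deg H (y (a, b)) = join_parts k (head_part k b - head_part k a) (tail_part k b - tail_part k a)"
    using ab \<mu>_ends(1,2) act_deg[OF za] by (simp add: y_def H_def lift_path_apply \<mu>_def)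
  also have "\<dots> = b - a"
    using ab join_head_tail[of a k l] join_head_tail[of b k l] by (simp add: join_parts_diff Omega_iff)
  finally have deg: "deg H (y (a, b)) = b - a" .
  have "\<alpha> (- toZ (tail_part k b - tail_part k a)) (\<alpha> (- toZ (tail_part k a)) (src G \<mu>))
      = \<alpha> (- toZ (tail_part k b)) (src G \<mu>)"
    using act_add[OF zd za src_mor[OF \<mu>_ends(1)]] toZ_diff[OF tab] by simp
  then have src: "src H (y (a, b)) = y (b, b)"
    using ab bb \<mu>_ends act_src[OF za] by (simp add: y_def H_def lift_path_apply \<mu>_def)
  have "rng H (y (a, b)) = y (a, a)"
    using ab aa \<mu>_ends act_rng[OF za] by (simp add: y_def H_def lift_path_apply \<mu>_def)
  moreover have "y (a, b) \<in> mor H"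
    using ab \<mu>_ends(1) act_mor[OF za] NN_diff[OF tb]
    by (simp add: y_def H_def lift_path_apply \<mu>_def)
  ultimately show ?thesis using deg src by blast
qed

lemma lift_path_cmp:
  assumes x: "x \<in> infpaths k G" and ab: "(a, b) \<in> Omega (k + l)" and bc: "(b, c) \<in> Omega (k + l)"
  shows "lift_path k l \<alpha> x (a, c) =
    cmp (crossed k l G \<alpha>) (lift_path k l \<alpha> x (a, b)) (lift_path k l \<alpha> x (b, c))"
proof -
  have ac: "(a, c) \<in> Omega (k + l)" using ab bc by (auto simp: Omega_iff)
  note hab = Omega_head_part[OF ab] and hbc = Omega_head_part[OF bc]
  have ta: "tail_part k a \<in> NN l" and tb: "tail_part k b \<in> NN l"
    and tab: "tail_part k a \<le> tail_part k b" and tbc: "tail_part k b \<le> tail_part k c"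
    using ab bc tail_part_NN tail_part_mono by (auto simp: Omega_iff)
  have za: "- toZ (tail_part k a) \<in> ZZ l" and zb: "- toZ (tail_part k b) \<in> ZZ l"
    and zd: "toZ (tail_part k b - tail_part k a) \<in> ZZ l"
    using ta tb NN_diff toZ_ZZ ZZ_uminus by blast+
  define \<mu> \<nu> where "\<mu> = x (head_part k a, head_part k b)" and "\<nu> = x (head_part k b, head_part k c)"
  have \<mu>: "\<mu> \<in> mor G" and \<nu>: "\<nu> \<in> mor G" and \<mu>\<nu>: "src G \<mu> = rng G \<nu>"
    using infpathsD[OF x hab] infpathsD[OF x hbc] by (simp_all add: \<mu>_def \<nu>_def)
  have "\<alpha> (toZ (tail_part k b - tail_part k a)) (\<alpha> (- toZ (tail_part k b)) \<nu>)
      = \<alpha> (- toZ (tail_part k a)) \<nu>"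
    using act_add[OF zd zb \<nu>] toZ_diff[OF tab] by simp
  then have "cmp (crossed k l G \<alpha>) (lift_path k l \<alpha> x (a, b)) (lift_path k l \<alpha> x (b, c))
      = (\<alpha> (- toZ (tail_part k a)) (cmp G \<mu> \<nu>), tail_part k c - tail_part k a)"
    using ab bc act_cmp[OF za \<mu> \<nu> \<mu>\<nu>] diff_add_diff_fun[OF tab tbc]
    by (simp add: lift_path_apply \<mu>_def \<nu>_def)
  also have "\<dots> = lift_path k l \<alpha> x (a, c)"
    using ac infpaths_cmp[OF x hab hbc] by (simp add: lift_path_apply \<mu>_def \<nu>_def)
  finally show ?thesis by simp
qed

lemma lift_path_infpaths:
  "x \<in> infpaths k G \<Longrightarrow> lift_path k l \<alpha> x \<in> infpaths (k + l) (crossed k l G \<alpha>)"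
proof (rule infpathsI)
  fix z assume "z \<notin> Omega (k + l)"
  then show "lift_path k l \<alpha> x z = undefined" by (cases z) (simp add: lift_path_def)
qed (rule lift_path_ends lift_path_cmp; assumption)+

lemma lift_path_origin: "x \<in> infpaths k G \<Longrightarrow> lift_path k l \<alpha> x (0, 0) = (x (0, 0), 0)"
  using infpathsD(1)[of x k G 0 0] by (simp add: lift_path_apply Omega_iff)

lemma base_path_apply:
  assumes y: "y \<in> infpaths (k + l) (crossed k l G \<alpha>)" and pq: "(p, q) \<in> Omega k"
  shows "y (join_parts k p 0, join_parts k q 0) = (base_path k y (p, q), 0)"
    "base_path k y (p, q) \<in> mor G" "deg G (base_path k y (p, q)) = q - p"
  using crossed_infpath_value[OF y Omega_join_parts_zero[OF pq]] pq
  by (simp_all add: base_path_def Omega_iff)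

lemma base_path_infpaths:
  assumes y: "y \<in> infpaths (k + l) (crossed k l G \<alpha>)"
  shows "base_path k y \<in> infpaths k G"
proof -
  have ends: "rng G (base_path k y (p, q)) = base_path k y (p, p) \<and>
      src G (base_path k y (p, q)) = base_path k y (q, q)" if pq: "(p, q) \<in> Omega k" for p q
  proof -
    have pp: "(p, p) \<in> Omega k" and qq: "(q, q) \<in> Omega k" using pq by (auto simp: Omega_iff)
    from infpathsD(3,4)[OF y Omega_join_parts_zero[OF pq]] show ?thesis
      using base_path_apply[OF y pq] base_path_apply[OF y pp] base_path_apply[OF y qq]
        src_mor[OF base_path_apply(2)[OF y pq]]
      by simp
  qed
  have cmp: "base_path k y (p, r) = cmp G (base_path k y (p, q)) (base_path k y (q, r))"
    if pq: "(p, q) \<in> Omega k" and qr: "(q, r) \<in> Omega k" for p q r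
  proof -
    have pr: "(p, r) \<in> Omega k" using pq qr by (auto simp: Omega_iff)
    from infpaths_cmp[OF y Omega_join_parts_zero[OF pq] Omega_join_parts_zero[OF qr]] show ?thesis
      using base_path_apply[OF y pq] base_path_apply[OF y qr] base_path_apply[OF y pr] by simp
  qed
  have undef: "base_path k y z = undefined" if "z \<notin> Omega k" for z
    using that by (cases z) (simp add: base_path_def)
  show ?thesis
    by (rule infpathsI) (use base_path_apply(2,3)[OF y] ends cmp undef in auto)
qed

text \<open>The value of \<open>y\<close> at \<open>((p, m), (q, n))\<close> is read off by factorising \<open>y\<close> on
  \<open>((p, 0), (q, n))\<close> in two ways: through \<open>(p, m)\<close>, with a first factor of degree
  \<open>(0, m)\<close>, and through \<open>(q, 0)\<close>, with a second factor of degree \<open>(0, n)\<close>.\<close>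
lemma lift_base_path:
  assumes y: "y \<in> infpaths (k + l) (crossed k l G \<alpha>)"
  shows "lift_path k l \<alpha> (base_path k y) = y"
proof (intro ext, clarify)
  fix a b
  show "lift_path k l \<alpha> (base_path k y) (a, b) = y (a, b)"
  proof (cases "(a, b) \<in> Omega (k + l)")
    case False
    then show ?thesis using y by (simp add: lift_path_def infpaths_def)
  next
    case ab: True
    define p m q n where "p = head_part k a" and "m = tail_part k a"
      and "q = head_part k b" and "n = tail_part k b"
    have a: "a = join_parts k p m" and b: "b = join_parts k q n"
      using ab join_head_tail by (auto simp: Omega_iff p_def m_def q_def n_def)
    have pq: "(p, q) \<in> Omega k" using Omega_head_part[OF ab] by (simp add: p_def q_def)
    have pp: "(p, p) \<in> Omega k" and qq: "(q, q) \<in> Omega k" using pq by (auto simp: Omega_iff)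
    have m: "m \<in> NN l" and n: "n \<in> NN l" and mn: "m \<le> n"
      using ab tail_part_NN tail_part_mono by (auto simp: Omega_iff m_def n_def)
    define a0 b0 where "a0 = join_parts k p 0" and "b0 = join_parts k q 0"
    have a0a: "(a0, a) \<in> Omega (k + l)" and b0b: "(b0, b) \<in> Omega (k + l)"
      and a0b0: "(a0, b0) \<in> Omega (k + l)"
      using Omega_join_parts[OF pp NN_zero m] Omega_join_parts[OF qq NN_zero n]
        Omega_join_parts_zero[OF pq]
      by (simp_all add: a b a0_def b0_def)
    define w w' \<mu> where "w = fst (y (a0, a))" and "w' = fst (y (b0, b))" and "\<mu> = fst (y (a, b))"
    have y_a0a: "y (a0, a) = (w, m)" and w: "w \<in> mor G" "deg G w = 0"
      using crossed_infpath_value[OF y a0a] pq by (simp_all add: w_def a a0_def Omega_iff)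
    have y_b0b: "y (b0, b) = (w', n)" and w': "w' \<in> mor G" "deg G w' = 0"
      using crossed_infpath_value[OF y b0b] pq by (simp_all add: w'_def b b0_def Omega_iff)
    have y_ab: "y (a, b) = (\<mu>, n - m)" and \<mu>: "\<mu> \<in> mor G"
      using crossed_infpath_value[OF y ab] by (simp_all add: \<mu>_def m_def n_def)
    have y_a0b0: "y (a0, b0) = (base_path k y (p, q), 0)"
      using base_path_apply(1)[OF y pq] by (simp add: a0_def b0_def)
    have "src (crossed k l G \<alpha>) (y (a0, a)) = rng (crossed k l G \<alpha>) (y (a, b))"
      using infpathsD(4)[OF y a0a] infpathsD(3)[OF y ab] by simp
    then have "(\<alpha> (toZ m) \<mu>, m + (n - m)) = cmp (crossed k l G \<alpha>) (y (a0, a)) (y (a, b))"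
      unfolding y_a0a y_ab by (rule crossed_cmp_deg_zero_left[OF w m \<mu>, symmetric])
    also have "\<dots> = cmp (crossed k l G \<alpha>) (y (a0, b0)) (y (b0, b))"
      using infpaths_cmp[OF y a0a ab] infpaths_cmp[OF y a0b0 b0b] by simp
    also have "src (crossed k l G \<alpha>) (y (a0, b0)) = rng (crossed k l G \<alpha>) (y (b0, b))"
      using infpathsD(4)[OF y a0b0] infpathsD(3)[OF y b0b] by simp
    then have "cmp (crossed k l G \<alpha>) (y (a0, b0)) (y (b0, b)) = (base_path k y (p, q), n)"
      unfolding y_a0b0 y_b0b by (rule crossed_cmp_deg_zero_right[OF base_path_apply(2)[OF y pq] w'])
    finally have "\<mu> = \<alpha> (- toZ m) (base_path k y (p, q))"
      using act_cancel_uminus[OF toZ_ZZ[OF m] \<mu>] by simp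
    then show ?thesis using ab y_ab by (simp add: lift_path_apply p_def m_def q_def n_def)
  qed
qed

lemma vinfpaths_crossed:
  "vinfpaths (k + l) (crossed k l G \<alpha>) (v, 0) = lift_path k l \<alpha> ` vinfpaths k G v"
proof
  show "lift_path k l \<alpha> ` vinfpaths k G v \<subseteq> vinfpaths (k + l) (crossed k l G \<alpha>) (v, 0)"
    using lift_path_infpaths lift_path_origin by (auto simp: vinfpaths_def)
next
  show "vinfpaths (k + l) (crossed k l G \<alpha>) (v, 0) \<subseteq> lift_path k l \<alpha> ` vinfpaths k G v"
  proof
    fix y assume "y \<in> vinfpaths (k + l) (crossed k l G \<alpha>) (v, 0)"
    then have y: "y \<in> infpaths (k + l) (crossed k l G \<alpha>)" and "y (0, 0) = (v, 0)"
      by (simp_all add: vinfpaths_def)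
    with lift_path_origin[OF base_path_infpaths[OF y]] have "base_path k y (0, 0) = v"
      by (simp add: lift_base_path)
    with base_path_infpaths[OF y] have "base_path k y \<in> vinfpaths k G v"
      by (simp add: vinfpaths_def)
    then show "y \<in> lift_path k l \<alpha> ` vinfpaths k G v"
      using lift_base_path[OF y] by force
  qed
qed

lemma base_lift_path:
  assumes x: "x \<in> Omega k \<rightarrow>\<^sub>E mor G"
  shows "base_path k (lift_path k l \<alpha> x) = x"
proof (intro ext, clarify)
  fix p q
  show "base_path k (lift_path k l \<alpha> x) (p, q) = x (p, q)"
  proof (cases "(p, q) \<in> Omega k")
    case pq: True
    then show ?thesis
      using PiE_mem[OF x pq] Omega_join_parts_zero[OF pq]
      by (simp add: base_path_def lift_path_apply Omega_iff)
  next
    case False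
    then show ?thesis using x by (simp add: base_path_def PiE_def extensional_def)
  qed
qed

lemma inj_on_lift_path: "inj_on (lift_path k l \<alpha>) (Omega k \<rightarrow>\<^sub>E mor G)"
  by (rule inj_on_inverseI[where g = "base_path k"]) (rule base_lift_path)

lemma shift_lift_path:
  assumes x: "x \<in> Omega k \<rightarrow>\<^sub>E mor G" and p: "p \<in> NN k" and m: "m \<in> NN l"
  shows "shift (k + l) (join_parts k p m) (lift_path k l \<alpha> x) =
    lift_path k l \<alpha> (shift k p (autinf k (\<alpha> (- toZ m)) x))"
proof (intro ext, clarify)
  fix a b
  show "shift (k + l) (join_parts k p m) (lift_path k l \<alpha> x) (a, b) =
    lift_path k l \<alpha> (shift k p (autinf k (\<alpha> (- toZ m)) x)) (a, b)"
  proof (cases "(a, b) \<in> Omega (k + l)")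
    case False
    then show ?thesis by (simp add: shift_def lift_path_def)
  next
    case ab: True
    have ta: "- toZ (tail_part k a) \<in> ZZ l"
      using ab tail_part_NN toZ_ZZ ZZ_uminus by (auto simp: Omega_iff)
    have "x (p + head_part k a, p + head_part k b) \<in> mor G"
      using PiE_mem[OF x Omega_translate[OF Omega_head_part[OF ab] p]] .
    then have "\<alpha> (- toZ (m + tail_part k a)) (x (p + head_part k a, p + head_part k b)) =
        \<alpha> (- toZ (tail_part k a)) (\<alpha> (- toZ m) (x (p + head_part k a, p + head_part k b)))"
      using act_add[OF ta ZZ_uminus[OF toZ_ZZ[OF m]]] by (simp add: toZ_add add.commute)
    then show ?thesis
      using ab Omega_translate[OF ab join_parts_NN[OF p m]] Omega_head_part[OF ab]
        Omega_translate[OF Omega_head_part[OF ab] p]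
      by (simp add: shift_def lift_path_apply autinf_def p)
  qed
qed

lemma shift_lift_path_eq_iff:
  assumes x: "x \<in> infpaths k G" and "p \<in> NN k" "q \<in> NN k" "m \<in> NN l" "n \<in> NN l"
  shows "shift (k + l) (join_parts k p m) (lift_path k l \<alpha> x) =
      shift (k + l) (join_parts k q n) (lift_path k l \<alpha> x) \<longleftrightarrow>
    shift k p (autinf k (\<alpha> (- toZ m)) x) = shift k q (autinf k (\<alpha> (- toZ n)) x)"
proof -
  have "x \<in> Omega k \<rightarrow>\<^sub>E mor G" using x infpaths_PiE by blast
  moreover have "\<alpha> (- toZ m) ` mor G \<subseteq> mor G" "\<alpha> (- toZ n) ` mor G \<subseteq> mor G"
    using assms act_mor toZ_ZZ ZZ_uminus by blast+
  ultimately show ?thesis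
    using assms shift_lift_path inj_on_eq_iff[OF inj_on_lift_path] shift_autinf_PiE by metis
qed

end

theorem lemma4p7:
  fixes k l :: nat and G :: "'m kg" and \<alpha> :: "(nat \<Rightarrow> int) \<Rightarrow> 'm \<Rightarrow> 'm"
  assumes "kgraph k G" and "row_finite k G" and "no_sources k G" and "is_action l G \<alpha>"
  shows "alpha_aperiodic k l G \<alpha> \<longleftrightarrow> no_local_periodicity (k + l) (crossed k l G \<alpha>)"
proof -
  interpret k_graph_action k G l \<alpha> using assms(1,4) by unfold_locales
  have shift_ne_iff:
    "(\<exists>y\<in>vinfpaths (k + l) (crossed k l G \<alpha>) (v, 0).
        shift (k + l) (join_parts k p m) y \<noteq> shift (k + l) (join_parts k q n) y) \<longleftrightarrow>
     (\<exists>x\<in>vinfpaths k G v.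
        shift k p (autinf k (\<alpha> (- toZ m)) x) \<noteq> shift k q (autinf k (\<alpha> (- toZ n)) x))"
    if "p \<in> NN k" "q \<in> NN k" "m \<in> NN l" "n \<in> NN l" for v p q m n
    using shift_lift_path_eq_iff[OF _ that] unfolding vinfpaths_crossed image_iff
    by (auto simp: vinfpaths_def)
  show ?thesis
  proof
    assume "alpha_aperiodic k l G \<alpha>"
    then show "no_local_periodicity (k + l) (crossed k l G \<alpha>)"
      unfolding alpha_aperiodic_def no_local_periodicity_def vertex_crossed NN_add_split
      by (auto simp: shift_ne_iff join_parts_eq_iff)
  next
    assume nlp: "no_local_periodicity (k + l) (crossed k l G \<alpha>)"
    show "alpha_aperiodic k l G \<alpha>"
      unfolding alpha_aperiodic_def
    proof (intro allI impI)
      fix v p q m n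
      assume v: "vertex G v" and pqmn: "p \<in> NN k" "q \<in> NN k" "m \<in> NN l" "n \<in> NN l"
        and "(p, m) \<noteq> (q, n)"
      then have "join_parts k p m \<noteq> join_parts k q n" by (simp add: join_parts_eq_iff)
      with nlp v pqmn show "\<exists>x\<in>vinfpaths k G v.
          shift k p (autinf k (\<alpha> (- toZ m)) x) \<noteq> shift k q (autinf k (\<alpha> (- toZ n)) x)"
        unfolding no_local_periodicity_def vertex_crossed shift_ne_iff[OF pqmn, symmetric]
        using join_parts_NN[OF pqmn(1,3)] join_parts_NN[OF pqmn(2,4)] by blast
    qed
  qed
qed

end
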